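(* Let $\vartheta\in\{p,bp,r\}$. The inclusion $\int\mathcal{L}_u\subset\mathcal{H}_{\vartheta}$ holds and is strict.
   Context: $\Omega$ denotes the set of all complex double sequences $x=(x_{kl})_{k,l\ge 1}$. A double sequence is $p$-convergent (Pringsheim convergent) to $L$ if for every $\varepsilon>0$ there is $N$ with $|x_{kl}-L|<\varepsilon$ for all $k,l\ge N$; $bp$-convergent if bounded and $p$-convergent; $r$-convergent (regularly convergent) if $p$-convergent and every row and every column converges. For $\vartheta\in\{p,bp,r\}$, $\mathcal{C}_{\vartheta 0}$ is the set of double sequences $\vartheta$-convergent to $0$. $\Delta x_{kl}=x_{kl}-x_{k+1,l}-x_{k,l+1}+x_{k+1,l+1}$, and $\mathcal{H}_{\vartheta}=\{x\in\Omega:\sum_{k,l=1}^{\infty}|kl\,\Delta x_{kl}|<\infty\}\cap\mathcal{C}_{\vartheta 0}$. $\mathcal{L}_u=\{x\in\Omega:\sum_{k,l}|x_{kl}|<\infty\}$, and $\int\mathcal{L}_u=\{x\in\Omega:(kl\,x_{kl})_{k,l}\in\mathcal{L}_u\}$. *)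

theory Defs
  imports "HOL-Analysis.Analysis"
begin

(* Double sequences x = (x_kl)_{k,l>=1}, represented as nat => nat => complex;
   only the values at indices k,l >= 1 are ever inspected. *)
type_synonym dseq = "nat \<Rightarrow> nat \<Rightarrow> complex"

datatype conv_mode = Pconv | BPconv | Rconv

definition pconv_to :: "dseq \<Rightarrow> complex \<Rightarrow> bool" where
  "pconv_to x L \<longleftrightarrow> (\<forall>\<epsilon>>0. \<exists>N\<ge>1. \<forall>k\<ge>N. \<forall>l\<ge>N. norm (x k l - L) < \<epsilon>)"

definition dbounded :: "dseq \<Rightarrow> bool" where
  "dbounded x \<longleftrightarrow> (\<exists>B. \<forall>k\<ge>1. \<forall>l\<ge>1. norm (x k l) \<le> B)"

definition conv_to :: "conv_mode \<Rightarrow> dseq \<Rightarrow> complex \<Rightarrow> bool" where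
  "conv_to m x L = (case m of
      Pconv \<Rightarrow> pconv_to x L
    | BPconv \<Rightarrow> dbounded x \<and> pconv_to x L
    | Rconv \<Rightarrow> pconv_to x L \<and> (\<forall>k\<ge>1. convergent (\<lambda>l. x k l))
                           \<and> (\<forall>l\<ge>1. convergent (\<lambda>k. x k l)))"

definition C0 :: "conv_mode \<Rightarrow> dseq set" where
  "C0 m = {x. conv_to m x 0}"

definition Delta :: "dseq \<Rightarrow> nat \<Rightarrow> nat \<Rightarrow> complex" where
  "Delta x k l = x k l - x (Suc k) l - x k (Suc l) + x (Suc k) (Suc l)"

definition Lu :: "dseq set" where
  "Lu = {x. (\<lambda>(k,l). norm (x k l)) summable_on ({1..} \<times> {1..})}"

definition intLu :: "dseq set" where
  "intLu = {x. (\<lambda>k l. of_nat (k * l) * x k l) \<in> Lu}"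

definition Hspace :: "conv_mode \<Rightarrow> dseq set" where
  "Hspace m = {x. (\<lambda>(k,l). norm (of_nat (k * l) * Delta x k l)) summable_on ({1..} \<times> {1..})}
               \<inter> C0 m"

end

theory Submission
  imports Defs
begin

text \<open>If \<open>\<Sum> kl |x\<^sub>k\<^sub>l| < \<infinity>\<close>, every single term is bounded, so \<open>|x\<^sub>k\<^sub>l| \<le> S/(kl)\<close>,
  which forces convergence to \<open>0\<close> in each of the three senses; and \<open>kl |\<Delta>x\<^sub>k\<^sub>l|\<close> is
  dominated by four shifted copies of \<open>kl |x\<^sub>k\<^sub>l|\<close>, each of them summable.
  The inclusion is strict: the indicator of the first column \<open>l = 1\<close> does not depend on \<open>k\<close>,
  so its \<open>\<Delta>\<close> vanishes, and it tends to \<open>0\<close> in every sense, but \<open>kl x\<^sub>k\<^sub>l = k\<close> is unbounded.\<close>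

definition weighted_norm :: "dseq \<Rightarrow> nat \<times> nat \<Rightarrow> real" where
  "weighted_norm x = (\<lambda>(k, l). norm (of_nat (k * l) * x k l))"

lemma weighted_norm_nonneg: "0 \<le> weighted_norm x p"
  by (auto simp: weighted_norm_def split: prod.split)

lemma intLu_iff: "x \<in> intLu \<longleftrightarrow> weighted_norm x summable_on {1..} \<times> {1..}"
  by (simp add: intLu_def Lu_def weighted_norm_def)

lemma Hspace_iff:
  "x \<in> Hspace m \<longleftrightarrow> weighted_norm (Delta x) summable_on {1..} \<times> {1..} \<and> x \<in> C0 m"
  by (simp add: Hspace_def weighted_norm_def)

lemma summable_on_shift_pairs:
  fixes g :: "nat \<times> nat \<Rightarrow> 'a::{uniform_topological_group_add, topological_comm_monoid_add,
                                    ab_group_add, complete_uniform_space}"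
  assumes "g summable_on {m..} \<times> {n..}"
  shows "(\<lambda>(k, l). g (k + i, l + j)) summable_on {m..} \<times> {n..}"
proof -
  define h where "h = (\<lambda>(k, l). (k + i, l + j :: nat))"
  have "inj_on h ({m..} \<times> {n..})" "h ` ({m..} \<times> {n..}) \<subseteq> {m..} \<times> {n..}"
    by (auto simp: h_def inj_on_def)
  then have "(g \<circ> h) summable_on {m..} \<times> {n..}"
    using summable_on_reindex summable_on_subset[OF assms] by blast
  moreover have "g \<circ> h = (\<lambda>(k, l). g (k + i, l + j))"
    by (auto simp: h_def)
  ultimately show ?thesis by simp
qed

lemma nonneg_term_le_infsum:
  fixes f :: "'a \<Rightarrow> 'b::{topological_ab_group_add, ordered_comm_monoid_add, linorder_topology}"
  assumes "f summable_on A" "\<And>x. x \<in> A \<Longrightarrow> 0 \<le> f x" "a \<in> A"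
  shows "f a \<le> infsum f A"
  using finite_sum_le_infsum[OF assms(1), of "{a}"] assms by auto

lemma weighted_norm_bounded_if_intLu:
  assumes "x \<in> intLu"
  obtains S where "\<And>k l. k \<ge> 1 \<Longrightarrow> l \<ge> 1 \<Longrightarrow> real k * real l * norm (x k l) \<le> S"
proof
  fix k l :: nat assume "k \<ge> 1" "l \<ge> 1"
  then have "weighted_norm x (k, l) \<le> infsum (weighted_norm x) ({1..} \<times> {1..})"
    using assms by (intro nonneg_term_le_infsum) (auto simp: intLu_iff weighted_norm_nonneg)
  then show "real k * real l * norm (x k l) \<le> infsum (weighted_norm x) ({1..} \<times> {1..})"
    by (simp add: weighted_norm_def norm_mult)
qed

lemma pconv_to_zero_if_dominated:
  assumes "\<And>k l. k \<ge> 1 \<Longrightarrow> l \<ge> 1 \<Longrightarrow> norm (x k l) \<le> c k" and "c \<longlonglongrightarrow> 0"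
  shows "pconv_to x 0"
  unfolding pconv_to_def
proof (intro allI impI)
  fix e :: real assume "e > 0"
  then obtain N where N: "\<And>k. k \<ge> N \<Longrightarrow> norm (c k) < e"
    using \<open>c \<longlonglongrightarrow> 0\<close> by (auto simp: LIMSEQ_iff)
  have "norm (x k l - 0) < e" if "k \<ge> max N 1" "l \<ge> max N 1" for k l
    using assms(1)[of k l] N[of k] that by auto
  then show "\<exists>N\<ge>1. \<forall>k\<ge>N. \<forall>l\<ge>N. norm (x k l - 0) < e"
    by (intro exI[of _ "max N 1"]) auto
qed

lemma C0_if_weighted_bounded:
  assumes bound: "\<And>k l. k \<ge> 1 \<Longrightarrow> l \<ge> 1 \<Longrightarrow> real k * real l * norm (x k l) \<le> S"
  shows "x \<in> C0 m"
proof -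
  have le_row: "norm (x k l) \<le> S / real k" and le_col: "norm (x k l) \<le> S / real l"
    if "k \<ge> 1" "l \<ge> 1" for k l
  proof -
    have "real k * norm (x k l) * 1 \<le> real k * norm (x k l) * real l"
         "real l * norm (x k l) * 1 \<le> real l * norm (x k l) * real k"
      using that by (intro mult_left_mono; simp)+
    then have "real k * norm (x k l) \<le> S" "real l * norm (x k l) \<le> S"
      using bound[OF that] by (simp_all add: mult_ac)
    then show "norm (x k l) \<le> S / real k" "norm (x k l) \<le> S / real l"
      using that by (simp_all add: pos_le_divide_eq mult.commute)
  qed
  have "pconv_to x 0"
    using le_row lim_const_over_n by (rule pconv_to_zero_if_dominated)
  moreover have "dbounded x"
    unfolding dbounded_def
  proof (intro exI allI impI)
    fix k l :: nat assume "k \<ge> 1" "l \<ge> 1"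
    then show "norm (x k l) \<le> S"
      using bound[of k l] mult_mono[of 1 "real k" 1 "real l"] norm_ge_zero[of "x k l"]
      by (smt (verit) mult_le_cancel_right1 of_nat_1 of_nat_mono)
  qed
  moreover have "(\<lambda>l. x k l) \<longlonglongrightarrow> 0" if "k \<ge> 1" for k
    by (rule Lim_null_comparison[OF eventually_mono[OF eventually_ge_at_top[of 1]] lim_const_over_n])
       (use le_col that in auto)
  moreover have "(\<lambda>k. x k l) \<longlonglongrightarrow> 0" if "l \<ge> 1" for l
    by (rule Lim_null_comparison[OF eventually_mono[OF eventually_ge_at_top[of 1]] lim_const_over_n])
       (use le_row that in auto)
  ultimately show ?thesis
    by (cases m) (auto simp: C0_def conv_to_def convergent_def)
qed

lemma weighted_norm_Delta_le:
  "weighted_norm (Delta x) (k, l) \<le> weighted_norm x (k, l) + weighted_norm x (Suc k, l)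
     + weighted_norm x (k, Suc l) + weighted_norm x (Suc k, Suc l)"
proof -
  have "weighted_norm (Delta x) (k, l)
      \<le> real (k * l) * (norm (x k l) + norm (x (Suc k) l) + norm (x k (Suc l)) + norm (x (Suc k) (Suc l)))"
    unfolding weighted_norm_def Delta_def
    by (auto simp: norm_mult simp del: of_nat_mult intro!: mult_left_mono
             order.trans[OF norm_triangle_ineq] order.trans[OF norm_triangle_ineq4] add_mono)
  also have "\<dots> \<le> real (k * l) * norm (x k l) + real (Suc k * l) * norm (x (Suc k) l)
      + real (k * Suc l) * norm (x k (Suc l)) + real (Suc k * Suc l) * norm (x (Suc k) (Suc l))"
    unfolding distrib_left by (intro add_mono mult_right_mono) auto
  also have "\<dots> = weighted_norm x (k, l) + weighted_norm x (Suc k, l)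
     + weighted_norm x (k, Suc l) + weighted_norm x (Suc k, Suc l)"
    by (simp only: weighted_norm_def norm_mult norm_of_nat case_prod_conv)
  finally show ?thesis .
qed

lemma Delta_summable_if_intLu:
  assumes "x \<in> intLu"
  shows "weighted_norm (Delta x) summable_on {1..} \<times> {1..}"
proof (rule summable_on_comparison_test)
  let ?w = "weighted_norm x"
  have "(\<lambda>(k, l). ?w (k + i, l + j)) summable_on {1..} \<times> {1..}" for i j
    using assms by (intro summable_on_shift_pairs) (simp add: intLu_iff)
  from this[of 0 0] this[of 1 0] this[of 0 1] this[of 1 1]
  show "(\<lambda>(k, l). ?w (k, l) + ?w (Suc k, l) + ?w (k, Suc l) + ?w (Suc k, Suc l))
          summable_on {1..} \<times> {1..}"
    by (simp add: summable_on_add case_prod_unfold)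
qed (auto simp: weighted_norm_Delta_le weighted_norm_nonneg)

lemma intLu_subset_Hspace: "intLu \<subseteq> Hspace m"
proof
  fix x assume x: "x \<in> intLu"
  obtain S where "\<And>k l. k \<ge> 1 \<Longrightarrow> l \<ge> 1 \<Longrightarrow> real k * real l * norm (x k l) \<le> S"
    using weighted_norm_bounded_if_intLu[OF x] by blast
  then have "x \<in> C0 m"
    by (rule C0_if_weighted_bounded)
  with Delta_summable_if_intLu[OF x] show "x \<in> Hspace m"
    unfolding Hspace_iff by blast
qed

definition first_column :: dseq where
  "first_column = (\<lambda>k l. if l = 1 then 1 else 0)"

lemma Delta_first_column: "Delta first_column k l = 0"
  by (simp add: Delta_def first_column_def)

lemma first_column_in_Hspace: "first_column \<in> Hspace m"
proof -
  have "weighted_norm (Delta first_column) = (\<lambda>_. 0)"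
    by (auto simp: weighted_norm_def Delta_first_column)
  moreover have "first_column \<in> C0 m"
  proof -
    have "pconv_to first_column 0"
      by (auto simp: pconv_to_def first_column_def intro!: exI[of _ 2])
    moreover have "dbounded first_column"
      by (auto simp: dbounded_def first_column_def intro!: exI[of _ 1])
    moreover have "(\<lambda>l. first_column k l) \<longlonglongrightarrow> 0" for k
      by (rule tendsto_eventually[OF eventually_mono[OF eventually_ge_at_top[of 2]]])
         (simp add: first_column_def)
    moreover have "convergent (\<lambda>k. first_column k l)" for l
      by (simp add: first_column_def convergent_const)
    ultimately show ?thesis
      by (cases m) (auto simp: C0_def conv_to_def convergent_def)
  qed
  ultimately show ?thesis
    by (simp add: Hspace_iff)
qed

lemma first_column_notin_intLu: "first_column \<notin> intLu"
proof
  assume "first_column \<in> intLu"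
  then obtain S where S: "\<And>k l. k \<ge> 1 \<Longrightarrow> l \<ge> 1 \<Longrightarrow> real k * real l * norm (first_column k l) \<le> S"
    using weighted_norm_bounded_if_intLu by blast
  obtain n :: nat where n: "real n > max S 0"
    using reals_Archimedean2 by blast
  then have "n \<ge> 1"
    by simp
  then have "real n \<le> S"
    using S[of n 1] by (simp add: first_column_def)
  with n show False
    by simp
qed

theorem corollary2p5:
  fixes \<theta> :: conv_mode
  shows "intLu \<subset> Hspace \<theta>"
  using intLu_subset_Hspace first_column_in_Hspace first_column_notin_intLu by blast

end
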